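(* Let $\alpha>2$, $\ell>\alpha$ an integer, $L>\ell$ an integer, and let $b^e$ and the constants $c_1,\dots,c_\ell$ be as defined in the context (set $c_i=0$ for $i>\ell$). Let $b=(b_1,\dots,b_L)$ be a solution on an interval of $s>0$ of $b_{i,s}=-(i-\alpha)b_1b_i+b_{i+1}$ ($1\le i\le L-1$), $b_{L,s}=-(L-\alpha)b_1b_L$, and write $b_k(s)=b^e_k(s)+U_k(s)/s^k$, $U=(U_1,\dots,U_L)$, $U_{L+1}:=0$. Then for $1\le k\le L$, $$U_{k,s}=\frac1s\Big[\frac{\alpha(\ell-k)}{\ell-\alpha}U_k-(k-\alpha)c_kU_1+U_{k+1}\Big]-\frac{(k-\alpha)U_1U_k}{s},$$ i.e. $U_s=\frac1sA_\ell U+O(|U|^2/s)$ where $A_\ell$ is the $L\times L$ matrix with entries $(A_\ell)_{k,k}=\frac{\alpha(\ell-k)}{\ell-\alpha}$ for $k\ge2$, $(A_\ell)_{1,1}=\frac{\alpha(\ell-1)}{\ell-\alpha}-(1-\alpha)c_1$, $(A_\ell)_{k,1}=-(k-\alpha)c_k$ for $2\le k\le\ell$, $(A_\ell)_{k,k+1}=1$ for $1\le k\le L-1$, and all other entries $0$. Moreover: $(A_\ell)_{k,j}=0$ whenever $k>\ell\ge j$; the upper-left $\ell\times\ell$ block $A'_\ell$ of $A_\ell$ has characteristic polynomial $\det(A'_\ell-X\,\mathrm{Id})=(X+1)\prod_{i=2}^{\ell}\big(\frac{i\alpha}{\ell-\alpha}-X\big)$, hence is diagonalizable with the distinct eigenvalues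 $-1,\frac{2\alpha}{\ell-\alpha},\dots,\frac{\ell\alpha}{\ell-\alpha}$; and the lower-right $(L-\ell)\times(L-\ell)$ block is upper triangular with diagonal entries $-\frac{(k-\ell)\alpha}{\ell-\alpha}$, $\ell+1\le k\le L$. Consequently the eigenvalues of $A_\ell$ are $-1,\frac{2\alpha}{\ell-\alpha},\dots,\frac{\ell\alpha}{\ell-\alpha}$ and $-\frac{\alpha}{\ell-\alpha},\dots,-\frac{(L-\ell)\alpha}{\ell-\alpha}$, and the eigenvectors for $-1,\frac{2\alpha}{\ell-\alpha},\dots,\frac{\ell\alpha}{\ell-\alpha}$ only involve the first $\ell$ coordinates.
   Context: $c_1=\frac{\ell}{\ell-\alpha}$, $c_{i+1}=-\frac{\alpha(\ell-i)}{\ell-\alpha}c_i$ for $1\le i\le\ell-1$; $b^e_i(s)=c_i/s^i$ for $1\le i\le\ell$ and $b^e_i\equiv0$ for $\ell<i\le L$ (this $b^e$ solves the same system). Subscript $s$ denotes $d/ds$. *)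

theory Defs
  imports "HOL-Analysis.Analysis" "Jordan_Normal_Form.Jordan_Normal_Form"
begin

fun cc :: "real \<Rightarrow> nat \<Rightarrow> nat \<Rightarrow> real" where
  "cc a l 0 = 0"
| "cc a l (Suc i) =
     (if i = 0 then real l / (real l - a)
      else if Suc i \<le> l then - (a * (real l - real i) / (real l - a)) * cc a l i
      else 0)"

definition be :: "real \<Rightarrow> nat \<Rightarrow> nat \<Rightarrow> real \<Rightarrow> real" where
  "be a l i s = (if 1 \<le> i \<and> i \<le> l then cc a l i / s ^ i else 0)"

text \<open>Entries of the matrix A_l, in the paper's 1-based indexing (k = row, j = column).\<close>
definition A_entry :: "real \<Rightarrow> nat \<Rightarrow> nat \<Rightarrow> nat \<Rightarrow> real" where
  "A_entry a l k j =
     (if k = 1 \<and> j = 1 then a * (real l - 1) / (real l - a) - (1 - a) * cc a l 1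
      else if k = j then a * (real l - real k) / (real l - a)
      else if j = 1 \<and> 2 \<le> k \<and> k \<le> l then - (real k - a) * cc a l k
      else if j = k + 1 then 1
      else 0)"

text \<open>The L x L matrix A_l (Jordan_Normal_Form matrices are 0-indexed:
  entry (k-1, j-1) is the paper's (A_l)_{k,j}).\<close>
definition A_mat :: "real \<Rightarrow> nat \<Rightarrow> nat \<Rightarrow> real mat" where
  "A_mat a l L = mat L L (\<lambda>(i, j). A_entry a l (i + 1) (j + 1))"

definition UL_block :: "real mat \<Rightarrow> nat \<Rightarrow> real mat" where
  "UL_block A l = mat l l (\<lambda>(i, j). A $$ (i, j))"

definition LR_block :: "real mat \<Rightarrow> nat \<Rightarrow> nat \<Rightarrow> real mat" where
  "LR_block A l L = mat (L - l) (L - l) (\<lambda>(i, j). A $$ (i + l, j + l))"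

definition diagonalizable_mat :: "real mat \<Rightarrow> bool" where
  "diagonalizable_mat A = (\<exists>D. diagonal_mat D \<and> similar_mat A D)"

end

theory Submission
  imports Defs "Jordan_Normal_Form.Jordan_Normal_Form_Existence"
begin

(* The differential equation for U is a direct computation: U_k = s^k b_k - c_k on the
   interval, and the recursion for the c_k, rewritten through c_1, turns the derivative
   of s^k b_k into the claimed linear-plus-quadratic expression (U_derivative).

   For the spectral statements we observe that A_l is an upper bidiagonal matrix with
   superdiagonal 1, bordered by an extra first column.  For any such matrix, expanding
   det(x Id - M) along the last row gives a two-term recurrence for the characteristic
   polynomial, and the eigenvector equation gives the same recurrence for the ratios
   v_i / v_0 (first part of the file).  Since the border column of A_l vanishes below
   row l, the characteristic polynomial of A_l is that of its upper-left block times the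
   diagonal factors of the lower-right block, and eigenvector coordinates beyond l vanish
   for the eigenvalues of the upper-left block.  The characteristic polynomial of the
   upper-left block is computed by summing the closed form of the recurrence backwards,
   using the recursion of the c_k as a three-term relation between border entries.
   Diagonalizability follows from Jordan normal form since all roots are simple. *)

(* An upper bidiagonal matrix (diagonal d, superdiagonal 1) bordered by an extra
  first column f. A_l is of this shape, with d and f given by A_diag and A_col below. *)
definition bordered_entry :: "(nat \<Rightarrow> 'a::field) \<Rightarrow> (nat \<Rightarrow> 'a) \<Rightarrow> nat \<Rightarrow> nat \<Rightarrow> 'a" where
  "bordered_entry d f i j =
     (if i = j then d i else 0) + (if j = 0 then f i else 0) + (if j = Suc i then 1 else 0)"

definition bordered_mat :: "nat \<Rightarrow> (nat \<Rightarrow> 'a::field) \<Rightarrow> (nat \<Rightarrow> 'a) \<Rightarrow> 'a mat" where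
  "bordered_mat n d f = mat n n (\<lambda>(i, j). bordered_entry d f i j)"

definition bordered_char_mat :: "nat \<Rightarrow> (nat \<Rightarrow> 'a::field) \<Rightarrow> (nat \<Rightarrow> 'a) \<Rightarrow> 'a \<Rightarrow> 'a mat" where
  "bordered_char_mat n d f x = mat n n (\<lambda>(i, j). (if i = j then x else 0) - bordered_entry d f i j)"

(* Characteristic polynomial of the bordered bidiagonal matrix, defined by the
  recurrence obtained from a Laplace expansion along the last row. *)
fun bordered_poly :: "(nat \<Rightarrow> 'a::field) \<Rightarrow> (nat \<Rightarrow> 'a) \<Rightarrow> nat \<Rightarrow> 'a \<Rightarrow> 'a" where
  "bordered_poly d f 0 x = 1"
| "bordered_poly d f (Suc n) x = (x - d n) * bordered_poly d f n x - f n"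

lemma bordered_mat_carrier [simp]: "bordered_mat n d f \<in> carrier_mat n n"
  by (simp add: bordered_mat_def)

lemma bordered_char_mat_carrier [simp]: "bordered_char_mat n d f x \<in> carrier_mat n n"
  by (simp add: bordered_char_mat_def)

(* Deleting the last row and first column of x Id - M leaves a lower triangular
  matrix with -1 on its diagonal. *)
lemma det_bordered_char_minor: "det (mat_delete (bordered_char_mat (Suc n) d f x) n 0) = (-1) ^ n"
proof -
  let ?D = "mat_delete (bordered_char_mat (Suc n) d f x) n 0"
  have D: "?D \<in> carrier_mat n n"
    using mat_delete_carrier[OF bordered_char_mat_carrier[of "Suc n" d f x], of n 0] by simp
  have ent: "?D $$ (i, j) = (if i = Suc j then x - d i else 0) - (if j = i then 1 else 0)"
    if "i < n" "j < n" for i j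
    using that by (auto simp: mat_delete_def bordered_char_mat_def bordered_entry_def)
  have "det ?D = prod_list (diag_mat ?D)"
    by (rule det_lower_triangular[OF _ D]) (simp add: ent)
  also have "diag_mat ?D = replicate n (-1)"
    using D by (auto simp: diag_mat_def ent intro!: nth_equalityI)
  finally show ?thesis by simp
qed

lemma det_bordered_char_mat: "det (bordered_char_mat n d f x) = bordered_poly d f n x"
proof (induction n)
  case 0
  then show ?case by (simp add: bordered_char_mat_def)
next
  case (Suc n)
  let ?K = "bordered_char_mat (Suc n) d f x"
  have last_minor: "mat_delete ?K n n = bordered_char_mat n d f x"
    by (rule eq_matI) (auto simp: mat_delete_def bordered_char_mat_def bordered_entry_def)
  have "det ?K = (\<Sum>j<Suc n. ?K $$ (n, j) * cofactor ?K n j)"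
    by (rule laplace_expansion_row[OF bordered_char_mat_carrier]) simp
  also have "\<dots> = (\<Sum>j<Suc n. (if j = n then (x - d n) * cofactor ?K n j else 0)
                   - (if j = 0 then f n * cofactor ?K n j else 0))"
    by (rule sum.cong) (auto simp: bordered_char_mat_def bordered_entry_def algebra_simps)
  also have "\<dots> = (x - d n) * cofactor ?K n n - f n * cofactor ?K n 0"
    by (simp add: sum_subtractf)
  also have "cofactor ?K n n = bordered_poly d f n x"
    using Suc.IH by (simp add: cofactor_def last_minor)
  also have "cofactor ?K n 0 = 1"
    by (simp add: cofactor_def det_bordered_char_minor flip: power_add)
  finally show ?case by simp
qed

lemma poly_char_poly_bordered: "poly (char_poly (bordered_mat n d f)) x = bordered_poly d f n x"
proof -
  have "- char_matrix (bordered_mat n d f) x = bordered_char_mat n d f x"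
    by (rule eq_matI) (auto simp: char_matrix_def bordered_mat_def bordered_char_mat_def)
  then show ?thesis
    by (simp add: char_poly_matrix[OF bordered_mat_carrier] det_bordered_char_mat)
qed

lemma bordered_poly_closed_form:
  "bordered_poly d f n x = (\<Prod>i<n. x - d i) - (\<Sum>k<n. f k * (\<Prod>i\<in>{Suc k..<n}. x - d i))"
proof (induction n)
  case 0
  then show ?case by simp
next
  case (Suc n)
  define S where "S = (\<Sum>k<n. f k * (\<Prod>i\<in>{Suc k..<n}. x - d i))"
  define P where "P = (\<Prod>i<n. x - d i)"
  have sum_Suc: "(\<Sum>k<Suc n. f k * (\<Prod>i\<in>{Suc k..<Suc n}. x - d i)) = S * (x - d n) + f n"
    unfolding S_def by (simp add: sum_distrib_right prod.atLeastLessThan_Suc mult.assoc)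
  have prod_Suc: "(\<Prod>i<Suc n. x - d i) = P * (x - d n)"
    unfolding P_def by simp
  have "bordered_poly d f (Suc n) x = (x - d n) * (P - S) - f n"
    using Suc.IH unfolding S_def P_def by simp
  then show ?case
    unfolding sum_Suc prod_Suc by (simp add: algebra_simps)
qed

lemma bordered_poly_tail:
  assumes "\<And>i. m \<le> i \<Longrightarrow> f i = 0"
  shows "bordered_poly d f (m + j) x = bordered_poly d f m x * (\<Prod>i\<in>{m..<m + j}. x - d i)"
  by (induction j) (auto simp: assms)

lemma bordered_mat_mult_vec:
  assumes v: "v \<in> carrier_vec n" and i: "Suc i < n"
  shows "(bordered_mat n d f *\<^sub>v v) $ i = d i * v $ i + f i * v $ 0 + v $ Suc i"
proof -
  have "(bordered_mat n d f *\<^sub>v v) $ i = (\<Sum>j = 0..<n. bordered_entry d f i j * v $ j)"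
    using v i by (auto simp: bordered_mat_def scalar_prod_def)
  also have "\<dots> = (\<Sum>j = 0..<n. (if j = i then d i * v $ j else 0)
      + (if j = 0 then f i * v $ j else 0) + (if j = Suc i then v $ j else 0))"
    by (rule sum.cong) (auto simp: bordered_entry_def algebra_simps)
  also have "\<dots> = d i * v $ i + f i * v $ 0 + v $ Suc i"
    using i by (simp add: sum.distrib)
  finally show ?thesis .
qed

(* An eigenvector is determined by its first coordinate: row i of M v = mu v
  expresses v_(i+1) through v_i and v_0, and the coefficients obey the same recurrence. *)
lemma bordered_eigenvector_coord:
  assumes ev: "eigenvector (bordered_mat n d f) v mu" and i: "i < n"
  shows "v $ i = bordered_poly d f i mu * v $ 0"
  using i
proof (induction i)
  case 0
  then show ?case by simp
next
  case (Suc i)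
  have v: "v \<in> carrier_vec n" and eq: "bordered_mat n d f *\<^sub>v v = mu \<cdot>\<^sub>v v"
    using ev unfolding eigenvector_def by (auto simp: bordered_mat_def)
  have "(bordered_mat n d f *\<^sub>v v) $ i = mu * v $ i"
    using eq v Suc.prems by simp
  then have "v $ Suc i = (mu - d i) * v $ i - f i * v $ 0"
    using bordered_mat_mult_vec[OF v Suc.prems] by (simp add: algebra_simps)
  then show ?case
    using Suc by (simp add: algebra_simps)
qed

lemma order_distinct_linear_factors:
  fixes as :: "'a::idom list"
  assumes "distinct as"
  shows "order c (\<Prod>x\<leftarrow>as. [:-x, 1:]) \<le> 1"
proof -
  have "order c (\<Prod>x\<leftarrow>as. [:-x, 1:]) = sum_list (map (\<lambda>x. if x = c then 1 else 0) as)"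
    by (subst order_prod_list) (auto simp: o_def order_linear' intro!: arg_cong[of _ _ sum_list])
  also have "\<dots> \<le> 1"
    using assms by (induction as) (auto simp: sum_list_map_eq_sum_count)
  finally show ?thesis .
qed

lemma jordan_matrix_diagonal:
  assumes "\<And>n a. (n, a) \<in> set n_as \<Longrightarrow> n = 1"
  shows "diagonal_mat (jordan_matrix n_as)"
  using assms
proof (induction n_as)
  case Nil
  then show ?case by (simp add: jordan_matrix_def diagonal_mat_def)
next
  case (Cons na n_as)
  obtain a where na: "na = (1, a)"
    using Cons.prems by (cases na) auto
  have "diagonal_mat (jordan_matrix n_as)" using Cons by auto
  then show ?case
    unfolding na jordan_matrix_Cons diagonal_mat_def by (auto simp: jordan_block_def)
qed

(* A matrix whose characteristic polynomial splits into distinct linear factors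
  is diagonalizable: the size of every Jordan block is bounded by a root multiplicity. *)
lemma similar_diagonal_of_distinct_roots:
  fixes A :: "'a::conjugatable_ordered_field mat"
  assumes A: "A \<in> carrier_mat n n" and cp: "char_poly A = (\<Prod>x\<leftarrow>as. [:-x, 1:])"
    and d: "distinct as"
  shows "\<exists>D. diagonal_mat D \<and> similar_mat A D"
proof -
  obtain n_as where j: "jordan_nf A n_as"
    using jordan_nf_exists[OF A cp] by blast
  have "n = 1" if m: "(n, a) \<in> set n_as" for n a
  proof -
    have "n \<le> order a (char_poly A)" by (rule jordan_nf_block_size_order_bound[OF j m])
    also have "\<dots> \<le> 1" unfolding cp using d by (rule order_distinct_linear_factors)
    finally show "n = 1"
      using j m unfolding jordan_nf_def by force
  qed
  then show ?thesis
    using j jordan_matrix_diagonal unfolding jordan_nf_def by blast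
qed

lemma cc_beyond: "l < k \<Longrightarrow> cc a l k = 0"
  by (cases k) auto

(* The recursion for c_k holds for every k >= 1, not only for k < l: at k = l
  the factor (l - k) is zero. *)
lemma cc_Suc: "1 \<le> k \<Longrightarrow> cc a l (Suc k) = - (a * (real l - real k) / (real l - a)) * cc a l k"
  by (cases k) (auto simp: cc_beyond)

lemma be_eq: "1 \<le> k \<Longrightarrow> be a l k s = cc a l k / s ^ k"
  by (simp add: be_def cc_beyond)

(* The diagonal coefficient of A_l rewritten through c_1; with it the recursion for
  c_k reads c_(k+1) = -(k - (k - a) c_1) c_k. *)
lemma diag_coeff_eq:
  assumes "real l \<noteq> a"
  shows "a * (real l - real k) / (real l - a) = real k - (real k - a) * cc a l 1"
  using assms by (simp add: field_simps)

(* The algebraic core of the equation for U_k = s^k b_k - c_k, with P = s^k. *)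
lemma perturbation_identity:
  fixes s P b1 bk B c1 ck ck1 e \<kappa> a :: real
  assumes "s \<noteq> 0" "e = \<kappa> - (\<kappa> - a) * c1" "ck1 = - e * ck"
  shows "\<kappa> * (P / s) * bk + (- (\<kappa> - a) * b1 * bk + B) * P
     = (1 / s) * (e * (P * bk - ck) - (\<kappa> - a) * ck * (s * b1 - c1) + (s * P * B - ck1))
       - (\<kappa> - a) * (s * b1 - c1) * (P * bk - ck) / s"
  using assms(1) unfolding assms(2,3) by (simp add: field_simps)

lemma U_derivative:
  fixes a :: real and l L k :: nat and I :: "real set" and b U :: "nat \<Rightarrow> real \<Rightarrow> real"
  assumes a: "real l \<noteq> a" and lL: "l < L" and I_pos: "I \<subseteq> {0<..}"
    and ode: "\<And>i s. 1 \<le> i \<Longrightarrow> i \<le> L - 1 \<Longrightarrow> s \<in> I \<Longrightarrow>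
               (b i has_real_derivative (- (real i - a) * b 1 s * b i s + b (i + 1) s)) (at s within I)"
    and odeL: "\<And>s. s \<in> I \<Longrightarrow>
               (b L has_real_derivative (- (real L - a) * b 1 s * b L s)) (at s within I)"
    and U_def: "\<And>k s. U k s = (if 1 \<le> k \<and> k \<le> L then s ^ k * (b k s - be a l k s) else 0)"
    and k: "1 \<le> k" "k \<le> L" and s: "s \<in> I"
  shows "(U k has_real_derivative
            (1 / s) * (a * (real l - real k) / (real l - a) * U k s
                       - (real k - a) * cc a l k * U 1 s + U (k + 1) s)
            - (real k - a) * U 1 s * U k s / s) (at s within I)"
proof -
  have s_pos: "s > 0" using s I_pos by auto
  define B where "B = (if k < L then b (k + 1) s else 0)"
  have db: "(b k has_real_derivative (- (real k - a) * b 1 s * b k s + B)) (at s within I)"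
    using ode[OF k(1) _ s] odeL[OF s] k by (cases "k < L") (auto simp: B_def)
  have U_on_I: "U k t = t ^ k * b k t - cc a l k" if "t \<in> I" for t
    using that I_pos k by (auto simp: U_def be_eq right_diff_distrib)
  have "((\<lambda>t. t ^ k * b k t - cc a l k) has_real_derivative
      (real k * s ^ (k - 1) * b k s + (- (real k - a) * b 1 s * b k s + B) * s ^ k)) (at s within I)"
    by (rule derivative_eq_intros db refl | simp)+
  then have dU: "(U k has_real_derivative
      (real k * s ^ (k - 1) * b k s + (- (real k - a) * b 1 s * b k s + B) * s ^ k)) (at s within I)"
    by (rule has_field_derivative_transform_within[OF _ s_pos s]) (simp add: U_on_I)
  have U1: "U 1 s = s * b 1 s - cc a l 1"
    using U_def s_pos lL by (simp add: be_eq right_diff_distrib)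
  have U_Suc: "U (k + 1) s = s * s ^ k * B - cc a l (Suc k)"
    using k lL s_pos by (cases "k < L") (auto simp: U_def B_def be_eq right_diff_distrib cc_beyond)
  have c_Suc: "cc a l (Suc k) = - (real k - (real k - a) * cc a l 1) * cc a l k"
    using cc_Suc[OF k(1), of a l] diag_coeff_eq[OF a] by (simp del: cc.simps)
  have s_pow: "s ^ (k - 1) = s ^ k / s"
    using s_pos k by (simp add: power_diff)
  have "real k * s ^ (k - 1) * b k s + (- (real k - a) * b 1 s * b k s + B) * s ^ k
     = (1 / s) * (a * (real l - real k) / (real l - a) * U k s
                  - (real k - a) * cc a l k * U 1 s + U (k + 1) s)
       - (real k - a) * U 1 s * U k s / s"
    unfolding U1 U_on_I[OF s] U_Suc diag_coeff_eq[OF a] s_pow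
    by (rule perturbation_identity[OF _ refl c_Suc]) (use s_pos in simp)
  with dU show ?thesis by simp
qed

(* Diagonal and border column of A_l in 0-based indexing: (A_l)_(i+1,i+1) =
  A_diag i except at i = 0, where the border column contributes as well. *)
definition A_diag :: "real \<Rightarrow> nat \<Rightarrow> nat \<Rightarrow> real" where
  "A_diag a l i = (real l - real i - 1) * (a / (real l - a))"

definition A_col :: "real \<Rightarrow> nat \<Rightarrow> nat \<Rightarrow> real" where
  "A_col a l i = - (real i + 1 - a) * cc a l (Suc i)"

lemma A_col_beyond: "l \<le> i \<Longrightarrow> A_col a l i = 0"
  by (simp add: A_col_def cc_beyond)

lemma A_diag_beyond:
  assumes "l \<le> i"
  shows "A_diag a l i = - (real (Suc i - l) * a / (real l - a))"
proof -
  have "real l - real i - 1 = - real (Suc i - l)"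
    using assms by (simp add: of_nat_diff)
  then have "A_diag a l i = - real (Suc i - l) * (a / (real l - a))"
    by (simp only: A_diag_def)
  then show ?thesis by simp
qed

lemma A_mat_bordered: "1 \<le> l \<Longrightarrow> A_mat a l L = bordered_mat L (A_diag a l) (A_col a l)"
  by (rule eq_matI)
    (auto simp: A_mat_def bordered_mat_def bordered_entry_def A_entry_def A_diag_def A_col_def
      cc_beyond diff_divide_distrib algebra_simps simp del: cc.simps)

lemma A_mat_entry:
  "1 \<le> l \<Longrightarrow> i < L \<Longrightarrow> j < L \<Longrightarrow> A_mat a l L $$ (i, j) = bordered_entry (A_diag a l) (A_col a l) i j"
  by (simp add: A_mat_bordered bordered_mat_def)

lemma A_mat_carrier: "A_mat a l L \<in> carrier_mat L L"
  by (simp add: A_mat_def)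

lemma A_mat_lower_left_zero:
  assumes "1 \<le> l" "l < k" "k \<le> L" "1 \<le> j" "j \<le> l"
  shows "A_mat a l L $$ (k - 1, j - 1) = 0"
  using assms by (auto simp: A_mat_entry bordered_entry_def A_col_beyond)

lemma LR_block_A_mat_entry:
  "1 \<le> l \<Longrightarrow> i < L - l \<Longrightarrow> j < L - l \<Longrightarrow>
     LR_block (A_mat a l L) l L $$ (i, j) = bordered_entry (A_diag a l) (A_col a l) (i + l) (j + l)"
  by (simp add: LR_block_def A_mat_entry)

lemma LR_block_upper_triangular:
  assumes "1 \<le> l"
  shows "upper_triangular (LR_block (A_mat a l L) l L)"
  unfolding upper_triangular_def
proof (intro allI impI)
  fix i j assume "i < dim_row (LR_block (A_mat a l L) l L)" "j < i"
  then have "i < L - l" "j < i" by (auto simp: LR_block_def)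
  then show "LR_block (A_mat a l L) l L $$ (i, j) = 0"
    using assms by (simp add: LR_block_A_mat_entry bordered_entry_def)
qed

lemma LR_block_diagonal:
  assumes "1 \<le> l" "l + 1 \<le> k" "k \<le> L"
  shows "LR_block (A_mat a l L) l L $$ (k - l - 1, k - l - 1) = - ((real k - real l) * a / (real l - a))"
proof -
  have "LR_block (A_mat a l L) l L $$ (k - l - 1, k - l - 1) = A_diag a l (k - 1)"
    using assms by (simp add: LR_block_A_mat_entry bordered_entry_def)
  also have "\<dots> = - (real (k - l) * a / (real l - a))"
    using A_diag_beyond[of l "k - 1" a] assms by simp
  finally show ?thesis
    using assms by (simp add: of_nat_diff)
qed

(* The recursion for c_k, written as a linear relation between three consecutive
  border entries; it drives the backward evaluation of the characteristic polynomial. *)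
lemma A_col_three_term:
  "A_col a l (m + 2) + 2 * (real l - real m - 2) * (a / (real l - a)) * A_col a l (m + 1)
     + (real l - real m - 1) * (real l - real m - 2) * (a / (real l - a))^2 * A_col a l m = 0"
proof -
  define \<beta> where "\<beta> = a / (real l - a)"
  define c1 c2 c3 where "c1 = cc a l (Suc m)" and "c2 = cc a l (Suc (Suc m))"
    and "c3 = cc a l (Suc (Suc (Suc m)))"
  have c2: "c2 = - (\<beta> * (real l - real m - 1)) * c1"
    using cc_Suc[of "Suc m" a l] unfolding c1_def c2_def \<beta>_def by (simp add: field_split_simps del: cc.simps)
  have c3: "c3 = - (\<beta> * (real l - real m - 2)) * c2"
    using cc_Suc[of "Suc (Suc m)" a l] unfolding c2_def c3_def \<beta>_def by (simp add: field_split_simps del: cc.simps)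
  have cols: "A_col a l (m + 2) = - (real m + 3 - a) * c3" "A_col a l (m + 1) = - (real m + 2 - a) * c2"
    "A_col a l m = - (real m + 1 - a) * c1"
    unfolding A_col_def c1_def c2_def c3_def by (simp_all add: algebra_simps del: cc.simps)
  show ?thesis
    unfolding \<beta>_def[symmetric] cols c3 c2 by (simp add: power2_eq_square algebra_simps)
qed

(* The last two diagonal entries of the upper-left block are a/(l-a) and 0. *)
lemma prod_A_diag_last_two:
  assumes l: "2 \<le> l" and m: "m \<le> l - 2"
  shows "(\<Prod>i\<in>{m..<l}. x - A_diag a l i)
       = (\<Prod>i\<in>{m..<l-2}. x - A_diag a l i) * ((x - a / (real l - a)) * x)"
proof -
  have split: "{m..<l} = {m..<l-2} \<union> {l-2, l-1}" using l m by auto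
  have "(\<Prod>i\<in>{m..<l}. x - A_diag a l i)
      = (\<Prod>i\<in>{m..<l-2}. x - A_diag a l i) * (\<Prod>i\<in>{l-2, l-1}. x - A_diag a l i)"
    unfolding split by (rule prod.union_disjoint) auto
  also have "(\<Prod>i\<in>{l-2, l-1}. x - A_diag a l i) = (x - A_diag a l (l-2)) * (x - A_diag a l (l-1))"
    using l by simp
  finally show ?thesis
    using l by (simp add: A_diag_def of_nat_diff)
qed

(* One step of the backward summation: a three-term relation between F0, F1, F2
  lets the factor x - r beta be pulled out. *)
lemma three_term_factorization:
  fixes F0 F1 F2 r \<beta> x :: real
  assumes "F2 + 2 * (r - 1) * \<beta> * F1 + r * (r - 1) * \<beta>^2 * F0 = 0"
  shows "F0 * ((x - \<beta>) * x) + (F1 * x + F2 + (r - 2) * \<beta> * F1)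
       = (x - r * \<beta>) * (F0 * x + F1 + (r - 1) * \<beta> * F0)"
  using assms by (simp add: power2_eq_square algebra_simps)

lemma A_col_tail_sum:
  assumes l: "2 \<le> l" and m: "m \<le> l - 2"
  shows "(\<Sum>k\<in>{m..<l}. A_col a l k * (\<Prod>i\<in>{Suc k..<l}. x - A_diag a l i))
     = (\<Prod>i\<in>{m..<l-2}. x - A_diag a l i)
       * (A_col a l m * x + A_col a l (m + 1) + (real l - real m - 2) * (a / (real l - a)) * A_col a l m)"
  using m
proof (induction m rule: inc_induct)
  case base
  have "{l-2..<l} = {l-2, l-1}" "{Suc (l-2)..<l} = {l-1}" "{Suc (l-1)..<l} = {}" "l - 2 \<noteq> l - 1"
    "Suc (l - 2) = l - 1" "l - 2 + 1 = l - 1"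
    using l by auto
  then show ?case
    using l by (simp add: A_diag_def of_nat_diff)
next
  case (step n)
  define \<beta> where "\<beta> = a / (real l - a)"
  define P where "P = (\<Prod>i\<in>{Suc n..<l-2}. x - A_diag a l i)"
  define F0 F1 F2 where "F0 = A_col a l n" and "F1 = A_col a l (n + 1)" and "F2 = A_col a l (n + 2)"
  have sum: "(\<Sum>k\<in>{n..<l}. A_col a l k * (\<Prod>i\<in>{Suc k..<l}. x - A_diag a l i))
     = F0 * (\<Prod>i\<in>{Suc n..<l}. x - A_diag a l i)
       + (\<Sum>k\<in>{Suc n..<l}. A_col a l k * (\<Prod>i\<in>{Suc k..<l}. x - A_diag a l i))"
    unfolding F0_def using step by (intro sum.atLeast_Suc_lessThan) auto
  have first: "(\<Prod>i\<in>{Suc n..<l}. x - A_diag a l i) = P * ((x - \<beta>) * x)"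
    unfolding P_def \<beta>_def using step l by (intro prod_A_diag_last_two) auto
  have prod: "(\<Prod>i\<in>{n..<l-2}. x - A_diag a l i) = (x - (real l - real n - 1) * \<beta>) * P"
    unfolding P_def \<beta>_def using step by (subst prod.atLeast_Suc_lessThan) (auto simp: A_diag_def)
  have rest: "(\<Sum>k\<in>{Suc n..<l}. A_col a l k * (\<Prod>i\<in>{Suc k..<l}. x - A_diag a l i))
     = P * (F1 * x + F2 + (real l - real n - 3) * \<beta> * F1)"
    using step.IH unfolding P_def \<beta>_def F1_def F2_def by (simp add: algebra_simps)
  have key: "F0 * ((x - \<beta>) * x) + (F1 * x + F2 + (real l - real n - 3) * \<beta> * F1)
      = (x - (real l - real n - 1) * \<beta>) * (F0 * x + F1 + (real l - real n - 2) * \<beta> * F0)"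
    using three_term_factorization[of F2 "real l - real n - 1" \<beta> F1 F0 x] A_col_three_term[of a l n]
    unfolding F0_def F1_def F2_def \<beta>_def by (simp add: algebra_simps)
  have "F0 * (P * ((x - \<beta>) * x)) + P * (F1 * x + F2 + (real l - real n - 3) * \<beta> * F1)
      = P * (F0 * ((x - \<beta>) * x) + (F1 * x + F2 + (real l - real n - 3) * \<beta> * F1))"
    by (simp add: algebra_simps)
  also have "\<dots> = (x - (real l - real n - 1) * \<beta>) * P * (F0 * x + F1 + (real l - real n - 2) * \<beta> * F0)"
    unfolding key by simp
  finally show ?case
    unfolding sum first prod rest F0_def[symmetric] F1_def[symmetric] \<beta>_def[symmetric] .
qed

lemma A_col_first_two:
  assumes "real l \<noteq> a"
  shows "(x - a / (real l - a)) * x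
           - (A_col a l 0 * x + A_col a l 1 + (real l - 2) * (a / (real l - a)) * A_col a l 0)
         = (x + 1) * (x - real l * a / (real l - a))"
proof -
  have c1: "cc a l (Suc 0) = real l / (real l - a)"
    by simp
  have "cc a l 2 = - (a * (real l - 1) / (real l - a)) * (real l / (real l - a))"
    using cc_Suc[of 1 a l] c1 by (simp add: numeral_2_eq_2 del: cc.simps)
  then have col1: "A_col a l 1 = - (2 - a) * (- (a * (real l - 1) / (real l - a)) * (real l / (real l - a)))"
    by (simp add: A_col_def numeral_2_eq_2 del: cc.simps)
  have col0: "A_col a l 0 = - (1 - a) * (real l / (real l - a))"
    by (simp add: A_col_def)
  show ?thesis
    unfolding col0 col1 using assms by (simp add: divide_simps) (simp add: algebra_simps)
qed

lemma prod_A_diag_reindex: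
  "(\<Prod>i\<in>{0..<l-2}. x - A_diag a l i) = (\<Prod>i\<in>{2..<l}. x - real i * a / (real l - a))"
proof (rule prod.reindex_bij_witness[where i = "\<lambda>i. l - 1 - i" and j = "\<lambda>i. l - 1 - i"])
  fix i assume "i \<in> {0..<l-2}"
  then show "x - real (l - 1 - i) * a / (real l - a) = x - A_diag a l i"
    by (simp add: A_diag_def of_nat_diff)
qed auto

lemma bordered_poly_A_upper_left:
  assumes l: "2 \<le> l" and a: "real l \<noteq> a"
  shows "bordered_poly (A_diag a l) (A_col a l) l x = (x + 1) * (\<Prod>i\<in>{2..l}. x - real i * a / (real l - a))"
proof -
  define Q where "Q = (\<Prod>i\<in>{0..<l-2}. x - A_diag a l i)"
  have "bordered_poly (A_diag a l) (A_col a l) l x = (\<Prod>i\<in>{0..<l}. x - A_diag a l i)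
      - (\<Sum>k\<in>{0..<l}. A_col a l k * (\<Prod>i\<in>{Suc k..<l}. x - A_diag a l i))"
    by (simp add: bordered_poly_closed_form atLeast0LessThan)
  also have "\<dots> = Q * ((x - a / (real l - a)) * x
      - (A_col a l 0 * x + A_col a l 1 + (real l - 2) * (a / (real l - a)) * A_col a l 0))"
    unfolding Q_def prod_A_diag_last_two[OF l zero_le] A_col_tail_sum[OF l zero_le]
    by (simp add: algebra_simps)
  also have "\<dots> = Q * (x - real l * a / (real l - a)) * (x + 1)"
    unfolding A_col_first_two[OF a] by simp
  also have "Q * (x - real l * a / (real l - a)) = (\<Prod>i\<in>{2..l}. x - real i * a / (real l - a))"
    using l by (simp add: Q_def prod_A_diag_reindex atLeastLessThanSuc_atLeastAtMost[symmetric]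
        prod.atLeastLessThan_Suc del: prod.op_ivl_Suc)
  finally show ?thesis by simp
qed

abbreviation upper_spectrum :: "real \<Rightarrow> nat \<Rightarrow> real set" where
  "upper_spectrum a l \<equiv> insert (-1) ((\<lambda>i. real i * a / (real l - a)) ` {2..l})"

lemma UL_block_A_mat:
  "1 \<le> l \<Longrightarrow> l \<le> L \<Longrightarrow> UL_block (A_mat a l L) l = bordered_mat l (A_diag a l) (A_col a l)"
  by (rule eq_matI) (auto simp: UL_block_def A_mat_bordered bordered_mat_def)

lemma UL_block_carrier: "UL_block A l \<in> carrier_mat l l"
  by (simp add: UL_block_def)

lemma poly_char_poly_UL:
  assumes "2 \<le> l" "l \<le> L" "real l \<noteq> a"
  shows "poly (char_poly (UL_block (A_mat a l L) l)) x
           = (x + 1) * (\<Prod>i\<in>{2..l}. x - real i * a / (real l - a))"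
  using assms by (simp add: UL_block_A_mat poly_char_poly_bordered bordered_poly_A_upper_left)

lemma char_poly_UL:
  assumes "2 \<le> l" "l \<le> L" "real l \<noteq> a"
  shows "char_poly (UL_block (A_mat a l L) l)
           = [:1, 1:] * (\<Prod>i = 2..l. [: - (real i * a / (real l - a)), 1 :])"
  by (rule poly_eq_poly_eq_iff[THEN iffD1], rule ext)
    (simp add: poly_char_poly_UL[OF assms] poly_prod algebra_simps)

lemma eigenvalues_UL:
  assumes "2 \<le> l" "l \<le> L" "real l \<noteq> a"
  shows "{mu. eigenvalue (UL_block (A_mat a l L) l) mu} = upper_spectrum a l"
  unfolding eigenvalue_root_char_poly[OF UL_block_carrier] poly_char_poly_UL[OF assms]
  by (auto simp: prod_zero_iff eq_neg_iff_add_eq_0)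

lemma card_upper_spectrum:
  assumes "0 < a" "a < real l"
  shows "card (upper_spectrum a l) = l"
proof -
  have inj: "inj_on (\<lambda>i. real i * a / (real l - a)) {2..l}"
    using assms by (intro inj_onI) (auto simp: field_simps)
  have nonneg: "real i * a / (real l - a) \<ge> 0" for i
    using assms by simp
  have "-1 \<notin> (\<lambda>i. real i * a / (real l - a)) ` {2..l}"
  proof
    assume "-1 \<in> (\<lambda>i. real i * a / (real l - a)) ` {2..l}"
    then obtain i where "-1 = real i * a / (real l - a)" by blast
    with nonneg[of i] show False by linarith
  qed
  moreover have "0 < l"
    using assms by simp
  ultimately show ?thesis
    using card_image[OF inj] by simp
qed

lemma diagonalizable_UL:
  assumes "2 \<le> l" "l \<le> L" "0 < a" "a < real l"
  shows "diagonalizable_mat (UL_block (A_mat a l L) l)"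
proof -
  define as where "as = (-1) # map (\<lambda>i. real i * a / (real l - a)) [2..<Suc l]"
  have "set as = upper_spectrum a l" "length as = l"
    using assms by (auto simp: as_def)
  then have distinct: "distinct as"
    using card_upper_spectrum[OF assms(3,4)] by (metis card_distinct)
  have factors: "(\<Prod>i = 2..l. [: - (real i * a / (real l - a)), 1 :])
      = (\<Prod>i\<leftarrow>[2..<Suc l]. [: - (real i * a / (real l - a)), 1 :])"
    by (subst prod.distinct_set_conv_list[symmetric]) (auto intro: prod.cong)
  then have char_poly: "char_poly (UL_block (A_mat a l L) l) = (\<Prod>x\<leftarrow>as. [:-x, 1:])"
    unfolding char_poly_UL[OF assms(1,2) less_imp_neq[OF assms(4), symmetric]] factors
    by (simp add: as_def o_def)
  show ?thesis
    unfolding diagonalizable_mat_def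
    by (rule similar_diagonal_of_distinct_roots[OF UL_block_carrier char_poly distinct])
qed

lemma bordered_poly_A:
  assumes "2 \<le> l" "l \<le> L" "real l \<noteq> a"
  shows "bordered_poly (A_diag a l) (A_col a l) L x
     = (x + 1) * (\<Prod>i\<in>{2..l}. x - real i * a / (real l - a)) * (\<Prod>i\<in>{l..<L}. x - A_diag a l i)"
  using bordered_poly_tail[of l "A_col a l" "A_diag a l" "L - l" x] assms
  by (simp add: A_col_beyond bordered_poly_A_upper_left)

lemma A_diag_lower_image:
  "A_diag a l ` {l..<L} = (\<lambda>j. - (real j * a / (real l - a))) ` {1..L - l}"
proof -
  have "A_diag a l ` {l..<L} = (\<lambda>j. - (real j * a / (real l - a))) ` ((\<lambda>i. Suc i - l) ` {l..<L})"
    unfolding image_image by (intro image_cong) (auto simp: A_diag_beyond)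
  also have "(\<lambda>i. Suc i - l) ` {l..<L} = {1..L - l}"
  proof (intro equalityI subsetI)
    fix j assume "j \<in> {1..L - l}"
    then show "j \<in> (\<lambda>i. Suc i - l) ` {l..<L}"
      by (intro image_eqI[of _ _ "l + j - 1"]) auto
  qed auto
  finally show ?thesis .
qed

lemma eigenvalues_A:
  assumes "2 \<le> l" "l \<le> L" "real l \<noteq> a"
  shows "{mu. eigenvalue (A_mat a l L) mu}
     = upper_spectrum a l \<union> (\<lambda>j. - (real j * a / (real l - a))) ` {1..L - l}"
proof -
  have "poly (char_poly (A_mat a l L)) x
     = (x + 1) * (\<Prod>i\<in>{2..l}. x - real i * a / (real l - a)) * (\<Prod>i\<in>{l..<L}. x - A_diag a l i)" for x
    using assms by (simp add: A_mat_bordered poly_char_poly_bordered bordered_poly_A)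
  then show ?thesis
    unfolding eigenvalue_root_char_poly[OF A_mat_carrier] A_diag_lower_image[symmetric]
    by (auto simp: prod_zero_iff eq_neg_iff_add_eq_0)
qed

(* Eigenvectors for the eigenvalues of the upper-left block have no component
  beyond the first l coordinates: there the coordinate polynomial contains the
  characteristic polynomial of the upper-left block as a factor. *)
lemma eigenvector_A_upper_spectrum:
  fixes v :: "real Matrix.vec"
  assumes "2 \<le> l" "l \<le> k" "k < L" "real l \<noteq> a"
    and mu: "mu \<in> upper_spectrum a l" and ev: "eigenvector (A_mat a l L) v mu"
  shows "v $ k = 0"
proof -
  have "bordered_poly (A_diag a l) (A_col a l) l mu = 0"
    using mu assms by (auto simp: bordered_poly_A_upper_left prod_zero_iff)
  then have "bordered_poly (A_diag a l) (A_col a l) k mu = 0"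
    using bordered_poly_tail[of l "A_col a l" "A_diag a l" "k - l" mu] assms by (simp add: A_col_beyond)
  then show ?thesis
    using bordered_eigenvector_coord[of L "A_diag a l" "A_col a l" v mu k] ev assms by (simp add: A_mat_bordered)
qed

theorem mainTheorem8:
  fixes a :: real and l L :: nat and I :: "real set"
    and b U :: "nat \<Rightarrow> real \<Rightarrow> real"
  assumes alpha: "a > 2"
    and ell: "real l > a"
    and LL: "L > l"
    and I_int: "is_interval I" and I_pos: "I \<subseteq> {0<..}"
    and ode: "\<And>i s. 1 \<le> i \<Longrightarrow> i \<le> L - 1 \<Longrightarrow> s \<in> I \<Longrightarrow>
               (b i has_real_derivative (- (real i - a) * b 1 s * b i s + b (i + 1) s)) (at s within I)"
    and odeL: "\<And>s. s \<in> I \<Longrightarrow>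
               (b L has_real_derivative (- (real L - a) * b 1 s * b L s)) (at s within I)"
    and U_def: "\<And>k s. U k s = (if 1 \<le> k \<and> k \<le> L then s ^ k * (b k s - be a l k s) else 0)"
  shows "(\<forall>k s. 1 \<le> k \<and> k \<le> L \<and> s \<in> I \<longrightarrow>
            (U k has_real_derivative
               (1 / s) * (a * (real l - real k) / (real l - a) * U k s
                          - (real k - a) * cc a l k * U 1 s + U (k + 1) s)
               - (real k - a) * U 1 s * U k s / s) (at s within I))
    \<and> (\<forall>k j. l < k \<and> k \<le> L \<and> 1 \<le> j \<and> j \<le> l \<longrightarrow> A_mat a l L $$ (k - 1, j - 1) = 0)
    \<and> char_poly (UL_block (A_mat a l L) l)
        = [:1, 1:] * (\<Prod>i = 2..l. [: - (real i * a / (real l - a)), 1 :])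
    \<and> diagonalizable_mat (UL_block (A_mat a l L) l)
    \<and> {mu. eigenvalue (UL_block (A_mat a l L) l) mu}
        = insert (-1) ((\<lambda>i. real i * a / (real l - a)) ` {2..l})
    \<and> card {mu. eigenvalue (UL_block (A_mat a l L) l) mu} = l
    \<and> upper_triangular (LR_block (A_mat a l L) l L)
    \<and> (\<forall>k. l + 1 \<le> k \<and> k \<le> L \<longrightarrow>
          LR_block (A_mat a l L) l L $$ (k - l - 1, k - l - 1)
            = - ((real k - real l) * a / (real l - a)))
    \<and> {mu. eigenvalue (A_mat a l L) mu}
        = insert (-1) ((\<lambda>i. real i * a / (real l - a)) ` {2..l})
          \<union> (\<lambda>j. - (real j * a / (real l - a))) ` {1..L - l}
    \<and> (\<forall>mu \<in> insert (-1) ((\<lambda>i. real i * a / (real l - a)) ` {2..l}).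
         \<forall>v. eigenvector (A_mat a l L) v mu \<longrightarrow> (\<forall>k. l \<le> k \<and> k < L \<longrightarrow> v $ k = 0))"
proof -
  have l2: "2 \<le> l" using alpha ell by linarith
  then have l1: "1 \<le> l" by simp
  have lL: "l \<le> L" and la: "real l \<noteq> a" and a_pos: "0 < a"
    using LL alpha ell by auto
  have eigenvectors: "\<forall>mu \<in> upper_spectrum a l. \<forall>v. eigenvector (A_mat a l L) v mu
      \<longrightarrow> (\<forall>k. l \<le> k \<and> k < L \<longrightarrow> v $ k = 0)"
    using eigenvector_A_upper_spectrum[OF l2 _ _ la] by blast
  show ?thesis
    using U_derivative[OF la LL I_pos ode odeL U_def] A_mat_lower_left_zero[OF l1]
      char_poly_UL[OF l2 lL la] diagonalizable_UL[OF l2 lL a_pos ell]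
      eigenvalues_UL[OF l2 lL la] card_upper_spectrum[OF a_pos ell]
      LR_block_upper_triangular[OF l1] LR_block_diagonal[OF l1] eigenvalues_A[OF l2 lL la]
    by (intro conjI eigenvectors) (auto simp del: cc.simps)
qed

end
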